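(* Let $\alpha\in(0,1]$ and $a,b\in\mathbb{R}$ with $0\le a<b$. Let $f:[a,b]\to[0,\infty)$ and $g:[a,b]\to[0,1]$ be $\alpha$-fractional integrable on $[a,b]$, with $f$ decreasing. Let $$ \ell:=\frac{\alpha(b-a)}{b^\alpha-a^\alpha}\int_a^b g(t)\,d_\alpha t. $$ Then $$ \int_{b-\ell}^b f(t)\,d_\alpha t\le\int_a^b f(t)g(t)\,d_\alpha t\le\int_a^{a+\ell}f(t)\,d_\alpha t. $$
   Context: For $\alpha\in(0,1]$ and $0\le a<b$, $\int_a^b f(t)\,d_\alpha t:=\int_a^b f(t)\,t^{\alpha-1}\,dt$, and $f$ is called $\alpha$-fractional integrable on $[a,b]$ if this integral exists and is finite. *)

theory Defs
  imports "HOL-Analysis.Analysis"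
begin

definition frac_integral :: "real \<Rightarrow> (real \<Rightarrow> real) \<Rightarrow> real \<Rightarrow> real \<Rightarrow> real" where
  "frac_integral \<alpha> f a b = integral {a..b} (\<lambda>t. f t * t powr (\<alpha> - 1))"

definition frac_integrable :: "real \<Rightarrow> (real \<Rightarrow> real) \<Rightarrow> real \<Rightarrow> real \<Rightarrow> bool" where
  "frac_integrable \<alpha> f a b \<longleftrightarrow> (\<lambda>t. f t * t powr (\<alpha> - 1)) integrable_on {a..b}"

end

theory Submission
  imports Defs
begin

text \<open>This is Steffensen's inequality for the weight \<open>w t = t powr (\<alpha> - 1)\<close>: for decreasing
  nonnegative \<open>f\<close> and \<open>0 \<le> g \<le> 1\<close>, the integral of \<open>f g w\<close> is at most that of \<open>f w\<close> over an
  initial segment \<open>[a, L]\<close> whose \<open>w\<close>-mass is at least \<open>\<integral> g w\<close>, since moving the mass of \<open>g w\<close>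
  to the left can only increase the integral; symmetrically for a final segment.
  The \<open>w\<close>-mass of \<open>[a, a + \<ell>]\<close> is \<open>((a + \<ell>) powr \<alpha> - a powr \<alpha>) / \<alpha>\<close>, and concavity of
  \<open>t powr \<alpha>\<close> (its secant lies below the graph) shows that \<open>[a, a + \<ell>]\<close> carries at least and
  \<open>[b - \<ell>, b]\<close> at most the mass \<open>\<integral> g w\<close>.\<close>

lemma antimono_on_mult_integrable_on:
  fixes f h :: "real \<Rightarrow> real"
  assumes f: "antimono_on {a..b} f"
    and h: "h integrable_on {a..b}" "\<And>t. t \<in> {a..b} \<Longrightarrow> 0 \<le> h t"
  shows "(\<lambda>t. f t * h t) integrable_on {a..b}"
proof -
  have "integrable (lebesgue_on {a..b}) (\<lambda>t. - f t)"
    using f by (intro integrable_mono_on) (auto simp: monotone_on_def)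
  then have "f \<in> borel_measurable (lebesgue_on {a..b})"
    using borel_measurable_integrable borel_measurable_uminus_eq by blast
  moreover have "f ` {a..b} \<subseteq> {f b..f a}"
    using f by (fastforce simp: monotone_on_def)
  then have "bounded (f ` {a..b})"
    by (rule bounded_subset[OF bounded_closed_interval])
  moreover have "h absolutely_integrable_on {a..b}"
    using h by (rule nonnegative_absolutely_integrable_1)
  ultimately have "(\<lambda>t. f t * h t) absolutely_integrable_on {a..b}"
    by (intro absolutely_integrable_bounded_measurable_product_real) auto
  then show ?thesis
    using absolutely_integrable_on_def by blast
qed

lemma has_integral_powr_minus_one:
  fixes \<alpha> c d :: real
  assumes "0 < \<alpha>" "0 \<le> c" "c \<le> d"
  shows "((\<lambda>t. t powr (\<alpha> - 1)) has_integral (d powr \<alpha> - c powr \<alpha>) / \<alpha>) {c..d}"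
proof -
  have "((\<lambda>t. t powr (\<alpha> - 1)) has_integral d powr \<alpha> / \<alpha> - c powr \<alpha> / \<alpha>) {c..d}"
  proof (rule fundamental_theorem_of_calculus_interior[OF \<open>c \<le> d\<close>])
    show "continuous_on {c..d} (\<lambda>t. t powr \<alpha> / \<alpha>)"
      using assms by (intro continuous_intros continuous_on_powr') auto
    fix x assume "x \<in> {c<..<d}"
    then have "0 < x" using assms by auto
    then show "((\<lambda>t. t powr \<alpha> / \<alpha>) has_vector_derivative x powr (\<alpha> - 1)) (at x)"
      using \<open>0 < \<alpha>\<close> unfolding has_real_derivative_iff_has_vector_derivative[symmetric]
      by (auto intro!: derivative_eq_intros)
  qed
  then show ?thesis by (simp add: diff_divide_distrib)
qed

lemma concave_on_powr:
  fixes p :: real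
  assumes "0 < p" "p \<le> 1"
  shows "concave_on {0..} (\<lambda>x. x powr p)"
proof (rule concave_on_linorderI)
  \<comment> \<open>The second-derivative test needs differentiability, so the endpoint \<open>0\<close> is treated by hand.\<close>
  have concave_pos: "concave_on {0<..} (\<lambda>x::real. x powr p)"
  proof (rule f''_le0_imp_concave)
    fix x :: real assume "x \<in> {0<..}"
    then show "((\<lambda>x. x powr p) has_real_derivative p * x powr (p - 1)) (at x)"
      and "((\<lambda>x. p * x powr (p - 1)) has_real_derivative p * ((p - 1) * x powr (p - 1 - 1))) (at x)"
      by (auto intro!: derivative_eq_intros)
    show "p * ((p - 1) * x powr (p - 1 - 1)) \<le> 0"
      using assms by (intro mult_nonneg_nonpos mult_nonpos_nonneg) auto
  qed (simp add: convex_real_interval)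
  fix t x y :: real
  assume t: "0 < t" "t < 1" and xy: "x \<in> {0..}" "y \<in> {0..}" "x < y"
  show "(1 - t) * x powr p + t * y powr p \<le> ((1 - t) *\<^sub>R x + t *\<^sub>R y) powr p"
  proof (cases "x = 0")
    case True
    have "t * y powr p \<le> t powr p * y powr p"
      using t assms powr_mono'[of p 1 t] by (intro mult_right_mono) auto
    then show ?thesis using True t xy by (simp add: powr_mult)
  next
    case False
    then show ?thesis
      using concave_onD[OF concave_pos, of t x y] t xy by simp
  qed
qed (simp add: convex_real_interval)

lemma powr_secant_le:
  fixes \<alpha> a b x :: real
  assumes "0 < \<alpha>" "\<alpha> \<le> 1" "0 \<le> a" "a \<le> x" "x \<le> b"
  shows "(x - a) * (b powr \<alpha> - a powr \<alpha>) \<le> (b - a) * (x powr \<alpha> - a powr \<alpha>)"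
proof (cases "a = b")
  case False
  define \<mu> where "\<mu> = (x - a) / (b - a)"
  have "0 \<le> \<mu>" "\<mu> \<le> 1"
    using assms False by (simp_all add: \<mu>_def divide_simps)
  moreover have "x = a + \<mu> * (b - a)"
    using False by (simp add: \<mu>_def)
  then have "x = (1 - \<mu>) * a + \<mu> * b"
    by (simp add: algebra_simps)
  ultimately have "(1 - \<mu>) * a powr \<alpha> + \<mu> * b powr \<alpha> \<le> x powr \<alpha>"
    using concave_onD[OF concave_on_powr[OF assms(1,2)], of \<mu> a b] assms by simp
  then have "\<mu> * (b powr \<alpha> - a powr \<alpha>) \<le> x powr \<alpha> - a powr \<alpha>"
    by (simp add: algebra_simps)
  then show ?thesis
    using assms False by (simp add: \<mu>_def field_simps)
qed (use assms in simp)

lemma powr_increment_bounds: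
  fixes \<alpha> a b G :: real
  assumes "0 < \<alpha>" "\<alpha> \<le> 1" "0 \<le> a" "a < b" "0 \<le> G" "\<alpha> * G \<le> b powr \<alpha> - a powr \<alpha>"
  defines "l \<equiv> \<alpha> * (b - a) / (b powr \<alpha> - a powr \<alpha>) * G"
  shows "0 \<le> l" "l \<le> b - a"
    and "\<alpha> * G \<le> (a + l) powr \<alpha> - a powr \<alpha>"
    and "b powr \<alpha> - (b - l) powr \<alpha> \<le> \<alpha> * G"
proof -
  define W where "W = b powr \<alpha> - a powr \<alpha>"
  have "0 < W"
    using assms by (simp add: W_def powr_less_mono2)
  have lW: "l * W = (b - a) * (\<alpha> * G)"
    using \<open>0 < W\<close> by (simp add: l_def W_def)
  show "0 \<le> l"
    using assms \<open>0 < W\<close> by (simp add: l_def W_def)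
  moreover have "l * W \<le> (b - a) * W"
    unfolding lW using assms by (simp add: W_def)
  then show "l \<le> b - a"
    using \<open>0 < W\<close> by simp
  ultimately have "l * W \<le> (b - a) * ((a + l) powr \<alpha> - a powr \<alpha>)"
    and "(b - l - a) * W \<le> (b - a) * ((b - l) powr \<alpha> - a powr \<alpha>)"
    using powr_secant_le[OF assms(1-3), of "a + l" b] powr_secant_le[OF assms(1-3), of "b - l" b]
    by (simp_all add: W_def)
  moreover have "(b - l - a) * W = (b - a) * (W - \<alpha> * G)"
    using lW by (simp add: algebra_simps)
  ultimately have "(b - a) * (\<alpha> * G) \<le> (b - a) * ((a + l) powr \<alpha> - a powr \<alpha>)"
    and "(b - a) * (W - \<alpha> * G) \<le> (b - a) * ((b - l) powr \<alpha> - a powr \<alpha>)"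
    using lW by simp_all
  then show "\<alpha> * G \<le> (a + l) powr \<alpha> - a powr \<alpha>"
    and "b powr \<alpha> - (b - l) powr \<alpha> \<le> \<alpha> * G"
    using \<open>a < b\<close> by (simp_all add: W_def)
qed

lemma steffensen_upper:
  fixes f g w :: "real \<Rightarrow> real" and a b L :: real
  assumes L: "a \<le> L" "L \<le> b"
    and f: "antimono_on {a..b} f" "\<And>t. t \<in> {a..b} \<Longrightarrow> 0 \<le> f t"
    and g: "\<And>t. t \<in> {a..b} \<Longrightarrow> 0 \<le> g t \<and> g t \<le> 1"
    and w: "\<And>t. t \<in> {a..b} \<Longrightarrow> 0 \<le> w t" "w integrable_on {a..b}"
    and fw: "(\<lambda>t. f t * w t) integrable_on {a..b}"
    and gw: "(\<lambda>t. g t * w t) integrable_on {a..b}"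
    and mass: "integral {a..b} (\<lambda>t. g t * w t) \<le> integral {a..L} w"
  shows "integral {a..b} (\<lambda>t. f t * g t * w t) \<le> integral {a..L} (\<lambda>t. f t * w t)"
proof -
  have fgw: "(\<lambda>t. f t * g t * w t) integrable_on {a..b}"
    using antimono_on_mult_integrable_on[OF f(1) gw] g w by (simp add: mult.assoc)
  have on_left: "h integrable_on {a..L}" and on_right: "h integrable_on {L..b}"
    if "h integrable_on {a..b}" for h :: "real \<Rightarrow> real"
    using integrable_subinterval_real[OF that] L by auto
  have fL: "f L \<le> f t" if "t \<in> {a..L}" for t
    using that L by (intro monotone_onD[OF f(1)]) auto
  have Lf: "f t \<le> f L" if "t \<in> {L..b}" for t
    using that L by (intro monotone_onD[OF f(1)]) auto
  have "integral {a..L} (\<lambda>t. f t * g t * w t - f t * w t)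
      \<le> integral {a..L} (\<lambda>t. f L * (g t * w t - w t))"
  proof (rule integral_le)
    fix t assume t: "t \<in> {a..L}"
    then have "(g t - 1) * w t \<le> 0"
      using g[of t] w(1)[of t] L by (auto intro: mult_nonpos_nonneg)
    then have "f t * ((g t - 1) * w t) \<le> f L * ((g t - 1) * w t)"
      by (rule mult_right_mono_neg[OF fL[OF t]])
    then show "f t * g t * w t - f t * w t \<le> f L * (g t * w t - w t)"
      by (simp add: algebra_simps)
  qed (intro integrable_diff integrable_on_mult_right on_left fgw fw gw w(2))+
  then have left: "integral {a..L} (\<lambda>t. f t * g t * w t) - integral {a..L} (\<lambda>t. f t * w t)
      \<le> f L * (integral {a..L} (\<lambda>t. g t * w t) - integral {a..L} w)"
    by (simp add: integral_diff on_left fgw fw gw w(2))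
  have right: "integral {L..b} (\<lambda>t. f t * g t * w t) \<le> f L * integral {L..b} (\<lambda>t. g t * w t)"
  proof -
    have "integral {L..b} (\<lambda>t. f t * g t * w t) \<le> integral {L..b} (\<lambda>t. f L * (g t * w t))"
    proof (rule integral_le)
      fix t assume t: "t \<in> {L..b}"
      then have "0 \<le> g t * w t"
        using g[of t] w(1)[of t] L by auto
      with Lf[OF t] show "f t * g t * w t \<le> f L * (g t * w t)"
        by (simp add: mult.assoc mult_right_mono)
    qed (intro integrable_on_mult_right on_right fgw gw)+
    then show ?thesis by simp
  qed
  have "f L * integral {a..b} (\<lambda>t. g t * w t) \<le> f L * integral {a..L} w"
    using mass f(2) L by (intro mult_left_mono) auto
  moreover have "integral {a..b} (\<lambda>t. g t * w t)
      = integral {a..L} (\<lambda>t. g t * w t) + integral {L..b} (\<lambda>t. g t * w t)"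
    and "integral {a..b} (\<lambda>t. f t * g t * w t)
      = integral {a..L} (\<lambda>t. f t * g t * w t) + integral {L..b} (\<lambda>t. f t * g t * w t)"
    using Henstock_Kurzweil_Integration.integral_combine[OF L gw]
      Henstock_Kurzweil_Integration.integral_combine[OF L fgw]
    by simp_all
  ultimately show ?thesis
    using left right by (simp add: algebra_simps)
qed

lemma steffensen_lower:
  fixes f g w :: "real \<Rightarrow> real" and a b M :: real
  assumes M: "a \<le> M" "M \<le> b"
    and f: "antimono_on {a..b} f" "\<And>t. t \<in> {a..b} \<Longrightarrow> 0 \<le> f t"
    and g: "\<And>t. t \<in> {a..b} \<Longrightarrow> 0 \<le> g t \<and> g t \<le> 1"
    and w: "\<And>t. t \<in> {a..b} \<Longrightarrow> 0 \<le> w t" "w integrable_on {a..b}"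
    and fw: "(\<lambda>t. f t * w t) integrable_on {a..b}"
    and gw: "(\<lambda>t. g t * w t) integrable_on {a..b}"
    and mass: "integral {M..b} w \<le> integral {a..b} (\<lambda>t. g t * w t)"
  shows "integral {M..b} (\<lambda>t. f t * w t) \<le> integral {a..b} (\<lambda>t. f t * g t * w t)"
proof -
  \<comment> \<open>Replacing \<open>g\<close> by \<open>1 - g\<close> turns this into the upper bound for the segment \<open>[a, M]\<close>.\<close>
  have fgw: "(\<lambda>t. f t * g t * w t) integrable_on {a..b}"
    using antimono_on_mult_integrable_on[OF f(1) gw] g w by (simp add: mult.assoc)
  have cgw: "(\<lambda>t. (1 - g t) * w t) integrable_on {a..b}"
    using integrable_diff[OF w(2) gw] by (simp add: algebra_simps)
  have "integral {a..b} (\<lambda>t. (1 - g t) * w t) = integral {a..b} w - integral {a..b} (\<lambda>t. g t * w t)"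
    using integral_diff[OF w(2) gw] by (simp add: algebra_simps)
  also have "\<dots> \<le> integral {a..M} w"
    using mass Henstock_Kurzweil_Integration.integral_combine[OF M w(2)] by simp
  finally have "integral {a..b} (\<lambda>t. f t * (1 - g t) * w t) \<le> integral {a..M} (\<lambda>t. f t * w t)"
    using g by (intro steffensen_upper[OF M f _ w fw cgw]) auto
  moreover have "integral {a..b} (\<lambda>t. f t * (1 - g t) * w t)
      = integral {a..b} (\<lambda>t. f t * w t) - integral {a..b} (\<lambda>t. f t * g t * w t)"
    using integral_diff[OF fw fgw] by (simp add: algebra_simps)
  moreover have "integral {a..b} (\<lambda>t. f t * w t)
      = integral {a..M} (\<lambda>t. f t * w t) + integral {M..b} (\<lambda>t. f t * w t)"
    using Henstock_Kurzweil_Integration.integral_combine[OF M fw] by simp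
  ultimately show ?thesis by simp
qed

theorem mainTheorem5:
  fixes \<alpha> a b :: real and f g :: "real \<Rightarrow> real"
  assumes "0 < \<alpha>" "\<alpha> \<le> 1" "0 \<le> a" "a < b"
    and "\<And>t. t \<in> {a..b} \<Longrightarrow> 0 \<le> f t"
    and "\<And>t. t \<in> {a..b} \<Longrightarrow> 0 \<le> g t \<and> g t \<le> 1"
    and "frac_integrable \<alpha> f a b" and "frac_integrable \<alpha> g a b"
    and "\<And>x y. x \<in> {a..b} \<Longrightarrow> y \<in> {a..b} \<Longrightarrow> x \<le> y \<Longrightarrow> f y \<le> f x"
  defines "l \<equiv> \<alpha> * (b - a) / (b powr \<alpha> - a powr \<alpha>) * frac_integral \<alpha> g a b"
  shows "frac_integral \<alpha> f (b - l) b \<le> frac_integral \<alpha> (\<lambda>t. f t * g t) a b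
       \<and> frac_integral \<alpha> (\<lambda>t. f t * g t) a b \<le> frac_integral \<alpha> f a (a + l)"
proof -
  define w where "w = (\<lambda>t::real. t powr (\<alpha> - 1))"
  define G where "G = frac_integral \<alpha> g a b"
  have w_integral: "integral {c..d} w = (d powr \<alpha> - c powr \<alpha>) / \<alpha>" if "0 \<le> c" "c \<le> d" for c d
    using has_integral_powr_minus_one[OF assms(1) that] unfolding w_def by (rule integral_unique)
  have w: "\<And>t. t \<in> {a..b} \<Longrightarrow> 0 \<le> w t" "w integrable_on {a..b}"
    using has_integral_powr_minus_one[OF assms(1,3), of b] assms(4) by (auto simp: w_def)
  have f: "antimono_on {a..b} f"
    using assms(9) by (intro monotone_onI)
  have fw: "(\<lambda>t. f t * w t) integrable_on {a..b}" and gw: "(\<lambda>t. g t * w t) integrable_on {a..b}"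
    using assms(7,8) by (simp_all add: frac_integrable_def w_def)
  have G: "G = integral {a..b} (\<lambda>t. g t * w t)"
    by (simp add: G_def frac_integral_def w_def)
  have G_nonneg: "0 \<le> G"
    unfolding G using assms(6) w by (intro integral_nonneg gw) auto
  have "G \<le> integral {a..b} w"
    unfolding G using assms(6) w by (intro integral_le gw) (auto intro: mult_left_le_one_le)
  then have G_le: "\<alpha> * G \<le> b powr \<alpha> - a powr \<alpha>"
    using w_integral[of a b] assms(1,3,4) by (simp add: field_simps)
  have "l = \<alpha> * (b - a) / (b powr \<alpha> - a powr \<alpha>) * G"
    by (simp add: l_def G_def)
  note l = powr_increment_bounds[OF assms(1-4) G_nonneg G_le, folded this]
  have "\<alpha> * G \<le> \<alpha> * integral {a..a + l} w" "\<alpha> * integral {b - l..b} w \<le> \<alpha> * G"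
    using l w_integral[of a "a + l"] w_integral[of "b - l" b] assms(1,3) by simp_all
  then have mass: "integral {a..b} (\<lambda>t. g t * w t) \<le> integral {a..a + l} w"
      "integral {b - l..b} w \<le> integral {a..b} (\<lambda>t. g t * w t)"
    using assms(1) unfolding G by simp_all
  have "integral {a..b} (\<lambda>t. f t * g t * w t) \<le> integral {a..a + l} (\<lambda>t. f t * w t)"
    by (rule steffensen_upper[OF _ _ f assms(5,6) w fw gw mass(1)]) (use l in auto)
  moreover have "integral {b - l..b} (\<lambda>t. f t * w t) \<le> integral {a..b} (\<lambda>t. f t * g t * w t)"
    by (rule steffensen_lower[OF _ _ f assms(5,6) w fw gw mass(2)]) (use l in auto)
  ultimately show ?thesis
    unfolding frac_integral_def w_def by simp
qed

end
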